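(* Let $q$ be a prime power, $b,k,t$ positive integers with $b\le k$, $a\in\mathbb{F}_q$ nonzero, and $\boldsymbol{x}_i=(a^i0^{k-i})\in\mathbb{F}_q^k$ (the first $i$ coordinates equal to $a$, the rest $0$) for $i\in\{0,1,\ldots,k-b+1\}$. Then \[ r_b^{wt_b}(k,t)\ge N_b\big(\boldsymbol{B}^{(1)}_{wt_b}(t,\boldsymbol{x}_0,\ldots,\boldsymbol{x}_{k-b+1})\big), \] where this $(k-b+2)\times(k-b+2)$ matrix (rows/columns indexed by $0,\ldots,k-b+1$) has entries $0$ for $i=j$ and $[2t-2b+3-|i-j|]^+$ for $i\ne j$.
   Context: For $\boldsymbol{z}=(z_0,\ldots,z_{n-1}),\boldsymbol{w}\in\mathbb{F}_q^n$, $d_b(\boldsymbol{z},\boldsymbol{w})$ is the number of $i\in\{0,\ldots,n-1\}$ with $(z_i,\ldots,z_{i+b-1})\ne(w_i,\ldots,w_{i+b-1})$ (indices mod $n$), and $wt_b(\boldsymbol{x})=d_b(\boldsymbol{x},\boldsymbol{0})$ is the $b$-symbol weight function on $\mathbb{F}_q^k$. $[x]^+=\max\{x,0\}$. A systematic encoding $\mathrm{Enc}(\boldsymbol{x})=(\boldsymbol{x},p(\boldsymbol{x}))\in\mathbb{F}_q^{k+r}$ is a function-correcting $b$-symbol code for $f$ if $d_b(\mathrm{Enc}(\boldsymbol{x}_1),\mathrm{Enc}(\boldsymbol{x}_2))\ge 2t+1$ whenever $f(\boldsymbol{x}_1)\ne f(\boldsymbol{x}_2)$; $r_b^f(k,t)$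 is the smallest $r$ for which one exists. For an $M\times M$ nonnegative integer matrix $\boldsymbol{B}$, $N_b(\boldsymbol{B})$ is the smallest $r$ such that there exist $\boldsymbol{p}_1,\ldots,\boldsymbol{p}_M\in\mathbb{F}_q^r$ (in some ordering) with $d_b(\boldsymbol{p}_i,\boldsymbol{p}_j)\ge[\boldsymbol{B}]_{ij}$ for all $i,j$. *)

theory Defs
  imports Main
begin

(* Vectors in F_q^n are lists of length n over a finite field type 'a (q = CARD('a)). *)

(* b-symbol distance d_b(z,w): number of cyclic positions i whose length-b windows differ
   (indices mod n, n = length z; z and w are assumed to have equal length). *)
definition bdist :: "nat \<Rightarrow> 'a list \<Rightarrow> 'a list \<Rightarrow> nat" where
  "bdist b z w = card {i. i < length z \<and>
      (\<exists>j<b. z ! ((i + j) mod length z) \<noteq> w ! ((i + j) mod length z))}"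

definition bweight :: "nat \<Rightarrow> 'a::zero list \<Rightarrow> nat" where
  "bweight b x = bdist b x (replicate (length x) 0)"

(* p is the redundancy map of a systematic function-correcting b-symbol code
   Enc(x) = (x, p(x)) for f on F_q^k with redundancy r correcting t errors *)
definition is_fcbsc :: "nat \<Rightarrow> nat \<Rightarrow> nat \<Rightarrow> ('a list \<Rightarrow> 'c) \<Rightarrow> nat \<Rightarrow> ('a list \<Rightarrow> 'a list) \<Rightarrow> bool" where
  "is_fcbsc b k t f r p \<longleftrightarrow>
     (\<forall>x. length x = k \<longrightarrow> length (p x) = r) \<and>
     (\<forall>x1 x2. length x1 = k \<longrightarrow> length x2 = k \<longrightarrow> f x1 \<noteq> f x2 \<longrightarrow>
         2 * t + 1 \<le> bdist b (x1 @ p x1) (x2 @ p x2))"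

definition r_opt :: "nat \<Rightarrow> ('a list \<Rightarrow> 'c) \<Rightarrow> nat \<Rightarrow> nat \<Rightarrow> nat" where
  "r_opt b f k t = (LEAST r. \<exists>p. is_fcbsc b k t f r p)"

definition N_b :: "'a itself \<Rightarrow> nat \<Rightarrow> nat \<Rightarrow> (nat \<Rightarrow> nat \<Rightarrow> nat) \<Rightarrow> nat" where
  "N_b _ b M B = (LEAST r. \<exists>p :: nat \<Rightarrow> 'a list.
      (\<forall>i<M. length (p i) = r) \<and> (\<forall>i<M. \<forall>j<M. B i j \<le> bdist b (p i) (p j)))"

definition pos_part :: "int \<Rightarrow> nat" where
  "pos_part x = nat (max x 0)"

end

theory Submission
  imports Defs
begin

(* Take an optimal redundancy map p. The vectors x_i have pairwise distinct b-weights
   (wt_b(x_i) = i + b - 1 for i > 0), so their codewords (x_i, p(x_i)) are at b-distance at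
   least 2t + 1. The information parts differ exactly in the |i - j| coordinates between
   min(i,j) and max(i,j), which meet at most |i - j| + b - 1 cyclic windows; at most b - 1 more
   windows straddle the boundary into the redundancy part, and every other differing window
   lies inside the redundancy part. Hence d_b(p(x_i), p(x_j)) >= 2t + 1 - |i - j| - 2(b - 1),
   so the vectors p(x_i) witness N_b(B) <= r. An optimal p exists because the repetition code
   is a function-correcting code for every f. *)

definition diff_positions :: "'a list \<Rightarrow> 'a list \<Rightarrow> nat set" where
  "diff_positions z w = {i. i < length z \<and> z ! i \<noteq> w ! i}"

definition windows_meeting :: "nat \<Rightarrow> nat \<Rightarrow> nat set \<Rightarrow> nat set" where
  "windows_meeting b n D = {s. s < n \<and> (\<exists>j<b. (s + j) mod n \<in> D)}"

lemma finite_diff_positions [simp]: "finite (diff_positions z w)"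
  unfolding diff_positions_def by simp

lemma finite_windows_meeting [simp]: "finite (windows_meeting b n D)"
  unfolding windows_meeting_def by simp

lemma windows_meeting_mono: "D \<subseteq> E \<Longrightarrow> windows_meeting b n D \<subseteq> windows_meeting b n E"
  unfolding windows_meeting_def by blast

lemma windows_meeting_Un:
  "windows_meeting b n (D \<union> E) = windows_meeting b n D \<union> windows_meeting b n E"
  unfolding windows_meeting_def by blast

lemma bdist_eq_card_windows_meeting:
  "bdist b z w = card (windows_meeting b (length z) (diff_positions z w))"
proof -
  have "(s + j) mod n < n" if "s < n" for s j n :: nat
    using that by simp
  then show ?thesis
    unfolding bdist_def windows_meeting_def diff_positions_def
    by (intro arg_cong[where f = card] Collect_cong) blast
qed

lemma subset_windows_meeting: "0 < b \<Longrightarrow> D \<subseteq> {..<n} \<Longrightarrow> D \<subseteq> windows_meeting b n D"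
  unfolding windows_meeting_def by (auto intro!: exI[of _ 0])

lemma card_diff_positions_le_bdist:
  assumes "0 < b" shows "card (diff_positions z w) \<le> bdist b z w"
  unfolding bdist_eq_card_windows_meeting
  using assms by (intro card_mono subset_windows_meeting) (auto simp: diff_positions_def)

lemma diff_positions_append:
  assumes "length xs = length xs'"
  shows "diff_positions (xs @ ys) (xs' @ ys')
           = diff_positions xs xs' \<union> (+) (length xs) ` diff_positions ys ys'"
proof (rule set_eqI)
  fix i
  show "i \<in> diff_positions (xs @ ys) (xs' @ ys')
          \<longleftrightarrow> i \<in> diff_positions xs xs' \<union> (+) (length xs) ` diff_positions ys ys'"
    using assms by (cases "i < length xs")
      (auto simp: diff_positions_def nth_append image_iff intro!: exI[of _ "i - length xs"])
qed

lemma card_windows_meeting_interval: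
  assumes "b \<le> n"
  shows "card (windows_meeting b n {m..<M}) \<le> M - m + (b - 1)"
proof -
  (* a window start s hitting position p at offset j is p - j mod n, and v = p + (b - 1) - j
     ranges over an interval of length M - m + b - 1 *)
  define f where "f v = (v + n - (b - 1)) mod n" for v
  have "windows_meeting b n {m..<M} \<subseteq> f ` {m..<M + (b - 1)}"
  proof
    fix s assume "s \<in> windows_meeting b n {m..<M}"
    then obtain j where s: "s < n" and j: "j < b" and hit: "(s + j) mod n \<in> {m..<M}"
      unfolding windows_meeting_def by auto
    define p where "p = (s + j) mod n"
    have "f (p + (b - 1) - j) = (p + (n - j)) mod n"
      using j assms by (simp add: f_def)
    also have "\<dots> = (s + j + (n - j)) mod n"
      unfolding p_def by (simp add: mod_add_left_eq)
    also have "\<dots> = s"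
      using s j assms by simp
    finally show "s \<in> f ` {m..<M + (b - 1)}"
      using hit j unfolding p_def[symmetric] by (intro rev_image_eqI[of "p + (b - 1) - j"]) auto
  qed
  then have "card (windows_meeting b n {m..<M}) \<le> card (f ` {m..<M + (b - 1)})"
    by (intro card_mono) auto
  also have "\<dots> \<le> M - m + (b - 1)"
    using card_image_le[of "{m..<M + (b - 1)}" f] by simp
  finally show ?thesis .
qed

lemma windows_meeting_shift_subset:
  assumes "b \<le> k" and "D \<subseteq> {..<r}"
  shows "windows_meeting b (k + r) ((+) k ` D) \<subseteq> {k - b<..<k} \<union> (+) k ` windows_meeting b r D"
proof
  fix s assume "s \<in> windows_meeting b (k + r) ((+) k ` D)"
  then obtain j where s: "s < k + r" and j: "j < b" and hit: "(s + j) mod (k + r) \<in> (+) k ` D"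
    unfolding windows_meeting_def by auto
  then have hit_ge: "k \<le> (s + j) mod (k + r)" by auto
  show "s \<in> {k - b<..<k} \<union> (+) k ` windows_meeting b r D"
  proof (cases "s < k")
    case True
    have "\<not> s + j < k"
      using hit_ge by (meson le_trans mod_less_eq_dividend not_le)
    then have "k - b < s" using j assms(1) by linarith
    with True show ?thesis by simp
  next
    case False
    then obtain u where u: "s = k + u" and "u < r"
      using s by (metis add_less_cancel_left le_Suc_ex not_le)
    have "u + j < r"
    proof (rule ccontr)
      assume "\<not> u + j < r"
      then have "k + r \<le> s + j" "s + j - (k + r) < k + r"
        using u j assms(1) \<open>u < r\<close> by linarith+
      then have "(s + j) mod (k + r) = s + j - (k + r)"
        by (simp add: le_mod_geq)
      then show False using hit_ge u j assms(1) \<open>u < r\<close> by linarith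
    qed
    then have "u + j \<in> D"
      using hit u by (auto simp: add.assoc)
    then have "u \<in> windows_meeting b r D"
      using \<open>u + j < r\<close> j unfolding windows_meeting_def by auto
    then show ?thesis using u by blast
  qed
qed

lemma bdist_append_le:
  assumes "length x1 = k" and "length x2 = k" and "b \<le> k"
  shows "bdist b (x1 @ p1) (x2 @ p2)
           \<le> card (windows_meeting b (k + length p1) (diff_positions x1 x2)) + (b - 1) + bdist b p1 p2"
proof -
  let ?W = "windows_meeting b (k + length p1)"
  have "bdist b (x1 @ p1) (x2 @ p2) = card (?W (diff_positions x1 x2) \<union> ?W ((+) k ` diff_positions p1 p2))"
    using assms by (simp add: bdist_eq_card_windows_meeting diff_positions_append windows_meeting_Un)
  also have "\<dots> \<le> card (?W (diff_positions x1 x2)) + card (?W ((+) k ` diff_positions p1 p2))"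
    by (rule card_Un_le)
  also have "card (?W ((+) k ` diff_positions p1 p2))
               \<le> card ({k - b<..<k} \<union> (+) k ` windows_meeting b (length p1) (diff_positions p1 p2))"
    using assms(3) by (intro card_mono windows_meeting_shift_subset) (auto simp: diff_positions_def)
  also have "\<dots> \<le> card {k - b<..<k} + card ((+) k ` windows_meeting b (length p1) (diff_positions p1 p2))"
    by (rule card_Un_le)
  also have "\<dots> \<le> (b - 1) + bdist b p1 p2"
    using assms(3) by (simp add: bdist_eq_card_windows_meeting card_image)
  finally show ?thesis by simp
qed

lemma is_fcbsc_redundancy_bdist_bound:
  assumes code: "is_fcbsc b k t f r p"
    and "length x1 = k" and "length x2 = k" and "f x1 \<noteq> f x2" and "b \<le> k"
    and diff: "diff_positions x1 x2 \<subseteq> {m..<M}"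
  shows "2 * t + 1 \<le> (M - m) + 2 * (b - 1) + bdist b (p x1) (p x2)"
proof -
  have len: "length (p x1) = r"
    using code assms(2) unfolding is_fcbsc_def by blast
  have "2 * t + 1 \<le> bdist b (x1 @ p x1) (x2 @ p x2)"
    using code assms(2-4) unfolding is_fcbsc_def by blast
  also have "\<dots> \<le> card (windows_meeting b (k + r) (diff_positions x1 x2)) + (b - 1) + bdist b (p x1) (p x2)"
    using bdist_append_le[OF assms(2,3,5), of "p x1" "p x2"] len by simp
  also have "card (windows_meeting b (k + r) (diff_positions x1 x2))
               \<le> card (windows_meeting b (k + r) {m..<M})"
    by (intro card_mono windows_meeting_mono diff) simp
  also have "\<dots> \<le> (M - m) + (b - 1)"
    using assms(5) by (intro card_windows_meeting_interval) simp
  finally show ?thesis by simp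
qed

lemma nth_replicate_append_replicate:
  "i \<le> k \<Longrightarrow> q < k \<Longrightarrow> (replicate i a @ replicate (k - i) z) ! q = (if q < i then a else z)"
  by (simp add: nth_append)

lemma diff_positions_replicate_append_replicate:
  assumes "a \<noteq> z" and "i \<le> k" and "j \<le> k"
  shows "diff_positions (replicate i a @ replicate (k - i) z) (replicate j a @ replicate (k - j) z)
           = {min i j..<max i j}"
  using assms by (auto simp: diff_positions_def nth_replicate_append_replicate split: if_splits)

lemma windows_meeting_initial_segment:
  assumes "0 < b" and "0 < i" and "i + b \<le> k + 1"
  shows "windows_meeting b k {..<i} = {..<i} \<union> {k - b<..<k}"
proof (rule set_eqI)
  fix s
  show "s \<in> windows_meeting b k {..<i} \<longleftrightarrow> s \<in> {..<i} \<union> {k - b<..<k}"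
  proof
    assume "s \<in> windows_meeting b k {..<i}"
    then obtain j where "s < k" "j < b" "(s + j) mod k < i"
      unfolding windows_meeting_def by auto
    then show "s \<in> {..<i} \<union> {k - b<..<k}"
      by (cases "s + j < k") auto
  next
    assume s: "s \<in> {..<i} \<union> {k - b<..<k}"
    show "s \<in> windows_meeting b k {..<i}"
    proof (cases "s < i")
      case True
      then show ?thesis
        using assms unfolding windows_meeting_def by (auto intro!: exI[of _ 0])
    next
      case False
      then have "(s + (k - s)) mod k < i" "k - s < b" "s < k"
        using s assms by auto
      then show ?thesis
        unfolding windows_meeting_def by blast
    qed
  qed
qed

lemma bweight_replicate_append_replicate:
  fixes a :: "'a::zero"
  assumes "a \<noteq> 0" and "0 < b" and "b \<le> k" and "i \<le> k - b + 1"
  shows "bweight b (replicate i a @ replicate (k - i) 0) = (if i = 0 then 0 else i + b - 1)"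
proof -
  have "i \<le> k"
    using assms(2-4) by linarith
  then have "bweight b (replicate i a @ replicate (k - i) 0) = card (windows_meeting b k {..<i})"
    using diff_positions_replicate_append_replicate[OF assms(1), of i k 0]
    by (simp add: bweight_def bdist_eq_card_windows_meeting atLeast0LessThan)
  also have "\<dots> = (if i = 0 then 0 else i + b - 1)"
  proof (cases "i = 0")
    case False
    then have "windows_meeting b k {..<i} = {..<i} \<union> {k - b<..<k}"
      using assms by (intro windows_meeting_initial_segment) auto
    moreover have "{..<i} \<inter> {k - b<..<k} = {}"
      using assms(4) by auto
    ultimately show ?thesis
      using False assms(2,3,4) by (simp add: card_Un_disjoint)
  qed (simp add: windows_meeting_def)
  finally show ?thesis .
qed

lemma card_diff_positions_concat_replicate:
  assumes "length x = length y"
  shows "card (diff_positions (concat (replicate m x)) (concat (replicate m y)))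
           = m * card (diff_positions x y)"
proof (induction m)
  case (Suc m)
  have "diff_positions x y \<inter> (+) (length y) ` D = {}" for D
    using assms by (auto simp: diff_positions_def)
  then show ?case
    using Suc assms by (simp add: diff_positions_append card_Un_disjoint card_image)
qed (simp add: diff_positions_def)

lemma is_fcbsc_repetition:
  assumes "0 < b"
  shows "is_fcbsc b k t f (2 * t * k) (\<lambda>x. concat (replicate (2 * t) x))"
  unfolding is_fcbsc_def
proof (intro conjI allI impI)
  fix x :: "'a list" assume "length x = k"
  then show "length (concat (replicate (2 * t) x)) = 2 * t * k"
    by (simp add: length_concat sum_list_replicate)
next
  fix x1 x2 :: "'a list" assume len: "length x1 = k" "length x2 = k" and "f x1 \<noteq> f x2"
  then have "x1 \<noteq> x2"
    by blast
  then have "diff_positions x1 x2 \<noteq> {}"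
    using len by (auto simp: list_eq_iff_nth_eq diff_positions_def)
  then have "1 \<le> card (diff_positions x1 x2)"
    by (simp add: Suc_le_eq card_gt_0_iff)
  then have "(2 * t + 1) * 1 \<le> (2 * t + 1) * card (diff_positions x1 x2)"
    by (rule mult_le_mono2)
  also have "\<dots> = card (diff_positions (concat (replicate (2 * t + 1) x1))
                                      (concat (replicate (2 * t + 1) x2)))"
    using len by (intro card_diff_positions_concat_replicate[symmetric]) simp
  also have "\<dots> \<le> bdist b (concat (replicate (2 * t + 1) x1)) (concat (replicate (2 * t + 1) x2))"
    using assms by (rule card_diff_positions_le_bdist)
  finally show "2 * t + 1 \<le> bdist b (x1 @ concat (replicate (2 * t) x1)) (x2 @ concat (replicate (2 * t) x2))"
    by simp
qed

lemma r_opt_attained: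
  assumes "0 < b"
  obtains p where "is_fcbsc b k t f (r_opt b f k t) p"
proof -
  have "\<exists>r p. is_fcbsc b k t f r p"
    using is_fcbsc_repetition[OF assms] by blast
  then have "\<exists>p. is_fcbsc b k t f (r_opt b f k t) p"
    unfolding r_opt_def by (rule LeastI_ex)
  then show thesis
    using that by blast
qed

lemma N_b_le:
  fixes p :: "nat \<Rightarrow> 'a list"
  assumes "\<And>i. i < M \<Longrightarrow> length (p i) = r"
    and "\<And>i j. i < M \<Longrightarrow> j < M \<Longrightarrow> B i j \<le> bdist b (p i) (p j)"
  shows "N_b TYPE('a) b M B \<le> r"
  unfolding N_b_def by (rule Least_le, rule exI[of _ p]) (simp add: assms)

lemma pos_part_le_iff: "pos_part z \<le> n \<longleftrightarrow> z \<le> int n"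
  by (auto simp: pos_part_def)

theorem lemma6p2:
  fixes a :: "'a::{finite, field}"
    and b k t :: nat
    and x :: "nat \<Rightarrow> 'a list"
    and B :: "nat \<Rightarrow> nat \<Rightarrow> nat"
  assumes "0 < b" and "0 < k" and "0 < t" and "b \<le> k"
    and "a \<noteq> 0"
    and "\<And>i. i \<le> k - b + 1 \<Longrightarrow> x i = replicate i a @ replicate (k - i) 0"
    and "\<And>i j. B i j = (if i = j then 0
            else pos_part (2 * int t - 2 * int b + 3 - \<bar>int i - int j\<bar>))"
  shows "N_b TYPE('a) b (k - b + 2) B \<le> r_opt b (bweight b :: 'a list \<Rightarrow> nat) k t"
proof -
  note b_pos = assms(1) and b_le_k = assms(4) and a_nonzero = assms(5)
    and x_def = assms(6) and B_def = assms(7)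
  define r where "r = r_opt b (bweight b :: 'a list \<Rightarrow> nat) k t"
  obtain p where code: "is_fcbsc b k t (bweight b :: 'a list \<Rightarrow> nat) r p"
    unfolding r_def using r_opt_attained[OF b_pos] by blast
  have len: "length (x i) = k" if "i < k - b + 2" for i
    using x_def[of i] that b_pos b_le_k by simp
  have len_p: "length (p (x i)) = r" if "i < k - b + 2" for i
    using code len[OF that] unfolding is_fcbsc_def by blast
  have weight: "bweight b (x i) = (if i = 0 then 0 else i + b - 1)" if "i < k - b + 2" for i
    using x_def[of i] that bweight_replicate_append_replicate[OF a_nonzero b_pos b_le_k, of i] by simp
  have "B i j \<le> bdist b (p (x i)) (p (x j))" if ij: "i < k - b + 2" "j < k - b + 2" "i \<noteq> j" for i j
  proof -
    have "bweight b (x i) \<noteq> bweight b (x j)"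
      using weight[OF ij(1)] weight[OF ij(2)] ij(3) b_pos by auto
    moreover have "diff_positions (x i) (x j) = {min i j..<max i j}"
      using x_def[of i] x_def[of j] ij b_pos b_le_k
        diff_positions_replicate_append_replicate[OF a_nonzero, of i k j] by simp
    ultimately have "2 * t + 1 \<le> (max i j - min i j) + 2 * (b - 1) + bdist b (p (x i)) (p (x j))"
      using is_fcbsc_redundancy_bdist_bound[OF code len[OF ij(1)] len[OF ij(2)] _ b_le_k] by blast
    then show ?thesis
      using ij(3) b_pos by (simp add: B_def pos_part_le_iff)
  qed
  then have "N_b TYPE('a) b (k - b + 2) B \<le> r"
    using len_p by (intro N_b_le) (auto simp: B_def)
  then show ?thesis
    unfolding r_def .
qed

end
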